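(* Let $n=p_1^{m_1}\cdots p_k^{m_k}$ be such that $\mathcal E_{\mathbb Z_n}$ has at least two vertices (i.e. $n$ is neither prime nor the square of a prime). Then the complement graph $\overline{\mathcal E_{\mathbb Z_n}}$ is connected if and only if $n=p_1p_2\cdots p_k$ is squarefree with $k\ge 3$.
   Context: Primes $p_1<\dots<p_k$, positive integers $m_i$. The essential ideal graph $\mathcal E_{\mathbb Z_n}$ has vertices the nonzero proper ideals of $\mathbb Z_n$, with distinct $I,K$ adjacent iff $I+K$ is essential (an ideal is essential if it meets every nonzero ideal nontrivially; a nonzero ideal $\langle p_1^{r_1}\cdots p_k^{r_k}\rangle$, $0\le r_i\le m_i$, is essential iff $r_j\ne m_j$ for all $j$). $\overline\Gamma$ denotes the complement of $\Gamma$. *)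

theory Defs
  imports "HOL-Algebra.Algebra" "HOL-Number_Theory.Residues" "HOL-Computational_Algebra.Squarefree"
begin

abbreviation Zn :: "nat \<Rightarrow> int ring" where
  "Zn n \<equiv> residue_ring (int n)"

definition essential_ideal :: "('a, 'b) ring_scheme \<Rightarrow> 'a set \<Rightarrow> bool" where
  "essential_ideal R E \<longleftrightarrow> ideal E R \<and>
     (\<forall>J. ideal J R \<and> J \<noteq> {\<zero>\<^bsub>R\<^esub>} \<longrightarrow> E \<inter> J \<noteq> {\<zero>\<^bsub>R\<^esub>})"

definition EIG_vertices :: "('a, 'b) ring_scheme \<Rightarrow> 'a set set" where
  "EIG_vertices R = {I. ideal I R \<and> I \<noteq> {\<zero>\<^bsub>R\<^esub>} \<and> I \<noteq> carrier R}"

definition EIG_adj :: "('a, 'b) ring_scheme \<Rightarrow> 'a set \<Rightarrow> 'a set \<Rightarrow> bool" where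
  "EIG_adj R I K \<longleftrightarrow> I \<in> EIG_vertices R \<and> K \<in> EIG_vertices R \<and> I \<noteq> K \<and>
     essential_ideal R (set_add R I K)"

definition EIG_compl_adj :: "('a, 'b) ring_scheme \<Rightarrow> 'a set \<Rightarrow> 'a set \<Rightarrow> bool" where
  "EIG_compl_adj R I K \<longleftrightarrow> I \<in> EIG_vertices R \<and> K \<in> EIG_vertices R \<and> I \<noteq> K \<and>
     \<not> EIG_adj R I K"

definition graph_connected :: "'v set \<Rightarrow> ('v \<Rightarrow> 'v \<Rightarrow> bool) \<Rightarrow> bool" where
  "graph_connected V E \<longleftrightarrow> (\<forall>u\<in>V. \<forall>v\<in>V. E\<^sup>*\<^sup>* u v)"

end

(*
  The ideals of Z_n are the <d> with d | n, and <d> + <e> = <gcd d e>, <d> \<inter> <e> = <lcm d e>.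
  Hence <d> and <e> are adjacent in the complement graph iff <gcd d e> is not essential.
  If p^2 | n, then gcd p e is 1 or p, and both <1> and <p> are essential: <p> is isolated.
  For squarefree n only <1> is essential, so adjacency means sharing a prime factor. With two
  primes p, q the only vertices are <p> and <q>, which are not adjacent; with at least three,
  <d> is joined to <d'> by <d> - <p> - <pq> - <q> - <d'> for primes p | d, q | d'.
*)

theory Submission
  imports Defs
begin

hide_const (open) Divisibility.prime \<comment> \<open>so that \<open>prime\<close> is the number-theoretic notion\<close>

section \<open>The ideals of \<open>\<int>/n\<close>\<close>

definition divisor_ideal :: "nat \<Rightarrow> nat \<Rightarrow> int set" where
  "divisor_ideal n d = {x. 0 \<le> x \<and> x < int n \<and> int d dvd x}"

lemma Zn_simps:
  "carrier (Zn n) = {0..int n - 1}" "\<zero>\<^bsub>Zn n\<^esub> = 0"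
  "x \<oplus>\<^bsub>Zn n\<^esub> y = (x + y) mod int n" "x \<otimes>\<^bsub>Zn n\<^esub> y = (x * y) mod int n"
  by (simp_all add: residue_ring_def)

lemma cring_Zn: "n \<ge> 2 \<Longrightarrow> cring (Zn n)"
  by (rule residues.cring) (simp add: residues_def)

lemma divisor_ideal_eq_PIdl:
  assumes n: "n \<ge> 2" and d: "d dvd n"
  shows "divisor_ideal n d = PIdl\<^bsub>Zn n\<^esub> (int d mod int n)"
proof
  have dn: "int d dvd int n" using d by simp
  show "PIdl\<^bsub>Zn n\<^esub> (int d mod int n) \<subseteq> divisor_ideal n d"
  proof
    fix y assume "y \<in> PIdl\<^bsub>Zn n\<^esub> (int d mod int n)"
    then obtain x where y: "y = (x * (int d mod int n)) mod int n"
      by (auto simp: cgenideal_def Zn_simps)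
    have "int d dvd x * (int d mod int n)" using dn by (simp add: dvd_mod)
    hence "int d dvd y" using dn y by (simp add: dvd_mod)
    thus "y \<in> divisor_ideal n d" using y n by (simp add: divisor_ideal_def)
  qed
  show "divisor_ideal n d \<subseteq> PIdl\<^bsub>Zn n\<^esub> (int d mod int n)"
  proof
    fix y assume "y \<in> divisor_ideal n d"
    then obtain c where y: "y = int d * c" "0 \<le> y" "y < int n"
      by (auto simp: divisor_ideal_def)
    have "y = (c mod int n) \<otimes>\<^bsub>Zn n\<^esub> (int d mod int n)"
      using y by (simp add: Zn_simps mod_mult_eq mult.commute)
    moreover have "c mod int n \<in> carrier (Zn n)" using n by (simp add: Zn_simps)
    ultimately show "y \<in> PIdl\<^bsub>Zn n\<^esub> (int d mod int n)" by (auto simp: cgenideal_def)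
  qed
qed

lemma ideal_divisor_ideal:
  assumes n: "n \<ge> 2" and d: "d dvd n"
  shows "ideal (divisor_ideal n d) (Zn n)"
proof -
  interpret cring "Zn n" using cring_Zn[OF n] .
  have "int d mod int n \<in> carrier (Zn n)" using n by (simp add: Zn_simps)
  thus ?thesis by (simp add: divisor_ideal_eq_PIdl[OF n d] cgenideal_ideal)
qed

lemma divisor_ideal_antimono: "d dvd e \<Longrightarrow> divisor_ideal n e \<subseteq> divisor_ideal n d"
  by (auto simp: divisor_ideal_def intro: dvd_trans)

lemma divisor_ideal_subset_iff:
  assumes n: "n > 0" and d: "d dvd n" and e: "e dvd n"
  shows "divisor_ideal n d \<subseteq> divisor_ideal n e \<longleftrightarrow> e dvd d"
proof
  assume sub: "divisor_ideal n d \<subseteq> divisor_ideal n e"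
  show "e dvd d"
  proof (cases "d = n")
    case False
    with d n have "int d \<in> divisor_ideal n d"
      by (auto simp: divisor_ideal_def dest: dvd_imp_le)
    hence "int d \<in> divisor_ideal n e" using sub by blast
    thus ?thesis by (simp add: divisor_ideal_def)
  qed (use e in simp)
qed (rule divisor_ideal_antimono)

lemma divisor_ideal_inj:
  "n > 0 \<Longrightarrow> d dvd n \<Longrightarrow> e dvd n \<Longrightarrow> divisor_ideal n d = divisor_ideal n e \<longleftrightarrow> d = e"
  by (metis divisor_ideal_subset_iff dvd_antisym order_refl)

lemma divisor_ideal_eq_zero_iff:
  assumes n: "n > 0" and d: "d dvd n"
  shows "divisor_ideal n d = {0} \<longleftrightarrow> d = n"
proof -
  have "divisor_ideal n n = {0}"
    using n by (auto simp: divisor_ideal_def dest: zdvd_imp_le)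
  thus ?thesis using divisor_ideal_inj[OF n d dvd_refl] by simp
qed

lemma divisor_ideal_eq_carrier_iff:
  assumes n: "n \<ge> 2" and d: "d dvd n"
  shows "divisor_ideal n d = carrier (Zn n) \<longleftrightarrow> d = 1"
proof -
  have "divisor_ideal n 1 = carrier (Zn n)" by (auto simp: divisor_ideal_def Zn_simps)
  thus ?thesis using divisor_ideal_inj[of n d 1] n d by simp
qed

lemma divisor_ideal_Int: "divisor_ideal n d \<inter> divisor_ideal n e = divisor_ideal n (lcm d e)"
  by (auto simp: divisor_ideal_def simp flip: lcm_int_int_eq)

context
  fixes n :: nat and I :: "int set"
  assumes n: "n \<ge> 2" and I: "ideal I (Zn n)"
begin

lemma Zn_ideal_subset: "I \<subseteq> {0..int n - 1}"
  using I by (metis additive_subgroup.a_subset ideal.axioms(1) Zn_simps(1))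

lemma Zn_ideal_zero: "0 \<in> I"
  using I by (metis additive_subgroup.zero_closed ideal.axioms(1) Zn_simps(2))

lemma Zn_ideal_lincomb_mod:
  assumes "x mod int n \<in> I" "y mod int n \<in> I"
  shows "(a * x + b * y) mod int n \<in> I"
proof -
  have mult: "(c * z) mod int n \<in> I" if "z mod int n \<in> I" for c z
  proof -
    have "c mod int n \<in> carrier (Zn n)" using n by (simp add: Zn_simps)
    from ideal.I_l_closed[OF I that this]
    show ?thesis by (simp add: Zn_simps mod_mult_eq)
  qed
  have "((a * x) mod int n + (b * y) mod int n) mod int n \<in> I"
    using additive_subgroup.a_closed[OF ideal.axioms(1)[OF I] mult mult] assms
    by (simp add: Zn_simps)
  thus ?thesis by (simp add: mod_add_eq)
qed

lemma Zn_ideal_gcd_mod: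
  assumes "x mod int n \<in> I" "y mod int n \<in> I"
  shows "gcd x y mod int n \<in> I"
proof -
  obtain u v where "u * x + v * y = gcd x y" using bezout_int by blast
  thus ?thesis using Zn_ideal_lincomb_mod[OF assms] by metis
qed

text \<open>The generator is the smallest of the numbers \<open>gcd x n\<close>, \<open>x \<in> I\<close>.\<close>

lemma Zn_ideal_generator:
  obtains d where "d dvd n" "int d mod int n \<in> I" "\<And>y. y \<in> I \<Longrightarrow> int d dvd y"
proof -
  define N where "N = int n"
  have in_I_mod: "x mod N = x" if "x \<in> I" for x
    using that Zn_ideal_subset by (auto simp: N_def)
  have "finite I" using Zn_ideal_subset finite_subset by blast
  define g where "g = Min ((\<lambda>x. gcd x N) ` I)"
  have g_le: "g \<le> gcd x N" if "x \<in> I" for x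
    unfolding g_def using \<open>finite I\<close> that by simp
  have "g \<in> (\<lambda>x. gcd x N) ` I"
    unfolding g_def using \<open>finite I\<close> Zn_ideal_zero by (intro Min_in) auto
  then obtain x0 where x0: "x0 \<in> I" "g = gcd x0 N" by auto
  have "g > 0" "g dvd N" using x0 n by (auto simp: N_def)
  have g_in_I: "g mod N \<in> I"
    using Zn_ideal_gcd_mod[of x0 N] x0 Zn_ideal_zero in_I_mod by (simp add: N_def)
  have g_dvd: "g dvd y" if y: "y \<in> I" for y
  proof -
    have "gcd g y mod N \<in> I"
      using Zn_ideal_gcd_mod[of g y] g_in_I y in_I_mod by (simp add: N_def)
    hence "g \<le> gcd (gcd g y mod N) N" by (rule g_le)
    also have "\<dots> = gcd (gcd g y) N" using n by (simp add: N_def)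
    also have "\<dots> = gcd g y" using dvd_trans[OF gcd_dvd1 \<open>g dvd N\<close>] by simp
    finally have "gcd g y = g"
      using \<open>g > 0\<close> by (simp add: antisym zdvd_imp_le)
    thus ?thesis by (metis gcd_dvd2)
  qed
  have "int (nat g) = g" using \<open>g > 0\<close> by simp
  thus ?thesis
    using that[of "nat g"] \<open>g dvd N\<close> g_in_I g_dvd by (metis N_def int_dvd_int_iff)
qed

lemma Zn_ideal_eq_divisor_ideal: "\<exists>d. d dvd n \<and> I = divisor_ideal n d"
proof -
  obtain d where d: "d dvd n" "int d mod int n \<in> I" "\<And>y. y \<in> I \<Longrightarrow> int d dvd y"
    using Zn_ideal_generator by blast
  have "I = divisor_ideal n d"
  proof
    show "I \<subseteq> divisor_ideal n d"
      using Zn_ideal_subset d(3) by (auto simp: divisor_ideal_def)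
    show "divisor_ideal n d \<subseteq> I"
    proof
      fix y assume "y \<in> divisor_ideal n d"
      then obtain c where y: "y = c * int d" "0 \<le> y" "y < int n"
        unfolding divisor_ideal_def by (metis (mono_tags) dvd_def mem_Collect_eq mult.commute)
      have "(c * int d + 0 * 0) mod int n \<in> I"
        using Zn_ideal_lincomb_mod[of "int d" 0] d(2) Zn_ideal_zero by simp
      thus "y \<in> I" using y by simp
    qed
  qed
  thus ?thesis using d(1) by blast
qed

end

lemma set_add_divisor_ideal:
  assumes n: "n \<ge> 2" and d: "d dvd n" and e: "e dvd n"
  shows "set_add (Zn n) (divisor_ideal n d) (divisor_ideal n e) = divisor_ideal n (gcd d e)"
    (is "?S = _")
proof -
  interpret cring "Zn n" using cring_Zn[OF n] .
  have Id: "ideal (divisor_ideal n d) (Zn n)" "ideal (divisor_ideal n e) (Zn n)"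
    using ideal_divisor_ideal n d e by auto
  have S: "?S = Idl\<^bsub>Zn n\<^esub> (divisor_ideal n d \<union> divisor_ideal n e)"
    using union_genideal[OF Id] by simp
  have gn: "gcd d e dvd n" using d by (meson dvd_trans gcd_dvd1)
  have "?S \<subseteq> divisor_ideal n (gcd d e)"
    unfolding S using divisor_ideal_antimono[of "gcd d e"]
    by (intro genideal_minimal ideal_divisor_ideal[OF n gn]) auto
  moreover have "divisor_ideal n (gcd d e) \<subseteq> ?S"
  proof -
    obtain g where g: "g dvd n" "?S = divisor_ideal n g"
      using Zn_ideal_eq_divisor_ideal[OF n add_ideals[OF Id]] by blast
    have "divisor_ideal n d \<union> divisor_ideal n e \<subseteq> ?S"
      unfolding S using Id by (intro genideal_self) (auto dest: ideal.Icarr)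
    hence "g dvd d" "g dvd e"
      using divisor_ideal_subset_iff[of n _ g] n d e g by auto
    thus ?thesis using g(2) divisor_ideal_antimono by simp
  qed
  ultimately show ?thesis by blast
qed

section \<open>Essential divisors\<close>

text \<open>A divisor \<open>g\<close> of \<open>n\<close> is essential when it corresponds to an essential ideal:
  the nonzero ideals are those of the divisors \<open>e \<noteq> n\<close>, and intersection is \<open>lcm\<close>.\<close>

definition essential_divisor :: "nat \<Rightarrow> nat \<Rightarrow> bool" where
  "essential_divisor n g \<longleftrightarrow> (\<forall>e. e dvd n \<longrightarrow> e \<noteq> n \<longrightarrow> lcm g e \<noteq> n)"

lemma essential_ideal_divisor_ideal_iff:
  assumes n: "n \<ge> 2" and d: "d dvd n"
  shows "essential_ideal (Zn n) (divisor_ideal n d) \<longleftrightarrow> essential_divisor n d"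
proof -
  have n0: "n > 0" using n by simp
  have nonzero_iff: "divisor_ideal n e \<noteq> {0} \<longleftrightarrow> e \<noteq> n" if "e dvd n" for e
    using divisor_ideal_eq_zero_iff[OF n0 that] by simp
  have "essential_ideal (Zn n) (divisor_ideal n d) \<longleftrightarrow>
      (\<forall>J. ideal J (Zn n) \<and> J \<noteq> {0} \<longrightarrow> divisor_ideal n d \<inter> J \<noteq> {0})"
    by (simp add: essential_ideal_def Zn_simps ideal_divisor_ideal[OF n d])
  also have "\<dots> \<longleftrightarrow> (\<forall>e. e dvd n \<and> e \<noteq> n \<longrightarrow> divisor_ideal n (lcm d e) \<noteq> {0})"
  proof
    assume ess: "\<forall>J. ideal J (Zn n) \<and> J \<noteq> {0} \<longrightarrow> divisor_ideal n d \<inter> J \<noteq> {0}"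
    show "\<forall>e. e dvd n \<and> e \<noteq> n \<longrightarrow> divisor_ideal n (lcm d e) \<noteq> {0}"
      using ess[rule_format, OF conjI[OF ideal_divisor_ideal[OF n]]] nonzero_iff
      by (simp add: divisor_ideal_Int)
  next
    assume ess: "\<forall>e. e dvd n \<and> e \<noteq> n \<longrightarrow> divisor_ideal n (lcm d e) \<noteq> {0}"
    show "\<forall>J. ideal J (Zn n) \<and> J \<noteq> {0} \<longrightarrow> divisor_ideal n d \<inter> J \<noteq> {0}"
    proof (intro allI impI)
      fix J assume J: "ideal J (Zn n) \<and> J \<noteq> {0}"
      then obtain e where e: "e dvd n" "J = divisor_ideal n e"
        using Zn_ideal_eq_divisor_ideal[OF n] by blast
      thus "divisor_ideal n d \<inter> J \<noteq> {0}"
        using ess J nonzero_iff by (auto simp: divisor_ideal_Int)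
    qed
  qed
  also have "\<dots> \<longleftrightarrow> essential_divisor n d"
    using d nonzero_iff by (auto simp: essential_divisor_def)
  finally show ?thesis .
qed

lemma essential_divisor_1: "essential_divisor n 1"
  by (simp add: essential_divisor_def)

lemma essential_divisor_prime_if_square_dvd:
  assumes p: "prime p" and pn: "p ^ 2 dvd n"
  shows "essential_divisor n p"
  unfolding essential_divisor_def
proof (intro allI impI notI)
  fix e assume e: "e dvd n" "e \<noteq> n" "lcm p e = n"
  show False
  proof (cases "p dvd e")
    case True
    thus False using e by (simp add: lcm_proj2_if_dvd)
  next
    case False
    hence "n = p * e" using p e by (simp add: prime_imp_coprime lcm_coprime)
    hence "p dvd e" using pn p by (simp add: power2_eq_square prime_gt_0_nat)
    thus False using False by simp
  qed
qed

lemma essential_divisor_squarefree_iff: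
  assumes sq: "squarefree n" and g: "g dvd n"
  shows "essential_divisor n g \<longleftrightarrow> g = 1"
proof
  assume ess: "essential_divisor n g"
  show "g = 1"
  proof (rule ccontr)
    assume "g \<noteq> 1"
    then obtain p where p: "prime p" "p dvd g" using prime_factor_nat by blast
    have "p dvd n" using p(2) g by (rule dvd_trans)
    then obtain e where ne: "n = p * e" by blast
    have "n \<noteq> 0" using sq by (metis not_squarefree_0)
    have "e \<noteq> n"
    proof
      assume "e = n"
      hence "n = p * n" using ne by simp
      hence "p = 1" using \<open>n \<noteq> 0\<close> by simp
      thus False using p(1) by simp
    qed
    hence "lcm g e \<noteq> n" using ess ne by (simp add: essential_divisor_def)
    have "\<not> p dvd e"
    proof
      assume "p dvd e"
      hence "p ^ 2 dvd n" using ne by (simp add: power2_eq_square)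
      hence "p dvd 1" using sq squarefreeD by blast
      thus False using p(1) by simp
    qed
    hence "coprime p e" using p(1) by (simp add: prime_imp_coprime)
    moreover have "p dvd lcm g e" using p(2) by (meson dvd_lcm1 dvd_trans)
    ultimately have "n dvd lcm g e" using ne by (simp add: divides_mult)
    hence "lcm g e = n" using g ne by (simp add: dvd_antisym)
    thus False using \<open>lcm g e \<noteq> n\<close> by simp
  qed
qed (use essential_divisor_1 in simp)

section \<open>The complement of the essential ideal graph of \<open>\<int>/n\<close>\<close>

definition nontrivial_divisors :: "nat \<Rightarrow> nat set" where
  "nontrivial_divisors n = {d. d dvd n \<and> d \<noteq> 1 \<and> d \<noteq> n}"

lemma EIG_vertices_Zn:
  assumes n: "n \<ge> 2"
  shows "EIG_vertices (Zn n) = divisor_ideal n ` nontrivial_divisors n"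
proof
  have n0: "n > 0" using n by simp
  show "EIG_vertices (Zn n) \<subseteq> divisor_ideal n ` nontrivial_divisors n"
  proof
    fix I assume "I \<in> EIG_vertices (Zn n)"
    hence I: "ideal I (Zn n)" "I \<noteq> {0}" "I \<noteq> carrier (Zn n)"
      by (auto simp: EIG_vertices_def Zn_simps(2))
    then obtain d where d: "d dvd n" "I = divisor_ideal n d"
      using Zn_ideal_eq_divisor_ideal[OF n] by blast
    moreover have "d \<noteq> n" using I d divisor_ideal_eq_zero_iff[OF n0 d(1)] by simp
    moreover have "d \<noteq> 1" using I d divisor_ideal_eq_carrier_iff[OF n d(1)] by simp
    ultimately show "I \<in> divisor_ideal n ` nontrivial_divisors n"
      by (auto simp: nontrivial_divisors_def)
  qed
  show "divisor_ideal n ` nontrivial_divisors n \<subseteq> EIG_vertices (Zn n)"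
    using ideal_divisor_ideal[OF n] divisor_ideal_eq_zero_iff[OF n0]
      divisor_ideal_eq_carrier_iff[OF n]
    by (auto simp: EIG_vertices_def nontrivial_divisors_def Zn_simps(2))
qed

lemma EIG_compl_adj_Zn:
  assumes n: "n \<ge> 2" and d: "d \<in> nontrivial_divisors n" and e: "e \<in> nontrivial_divisors n"
  shows "EIG_compl_adj (Zn n) (divisor_ideal n d) (divisor_ideal n e) \<longleftrightarrow>
         d \<noteq> e \<and> \<not> essential_divisor n (gcd d e)"
proof -
  have V: "divisor_ideal n d \<in> EIG_vertices (Zn n)" "divisor_ideal n e \<in> EIG_vertices (Zn n)"
    using EIG_vertices_Zn[OF n] d e by auto
  have dd: "d dvd n" "e dvd n" using d e by (auto simp: nontrivial_divisors_def)
  have gn: "gcd d e dvd n" using dd by (meson dvd_trans gcd_dvd1)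
  show ?thesis
    unfolding EIG_compl_adj_def EIG_adj_def
    using V divisor_ideal_inj[of n d e] n dd
    by (auto simp: set_add_divisor_ideal[OF n dd] essential_ideal_divisor_ideal_iff[OF n gn])
qed

lemma not_graph_connected_if_isolated:
  assumes "u \<in> V" "v \<in> V" "u \<noteq> v" "\<And>w. \<not> E u w"
  shows "\<not> graph_connected V E"
  using assms unfolding graph_connected_def by (metis converse_rtranclpE)

lemma EIG_compl_not_connected_if_isolated_divisor:
  assumes n: "n \<ge> 2" and d: "d \<in> nontrivial_divisors n"
    and iso: "\<And>e. e \<in> nontrivial_divisors n \<Longrightarrow> e \<noteq> d \<Longrightarrow> essential_divisor n (gcd d e)"
    and two: "\<exists>I\<in>EIG_vertices (Zn n). \<exists>K\<in>EIG_vertices (Zn n). I \<noteq> K"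
  shows "\<not> graph_connected (EIG_vertices (Zn n)) (EIG_compl_adj (Zn n))"
proof -
  note V = EIG_vertices_Zn[OF n]
  have u: "divisor_ideal n d \<in> EIG_vertices (Zn n)" using V d by blast
  then obtain K where "K \<in> EIG_vertices (Zn n)" "K \<noteq> divisor_ideal n d" using two by metis
  moreover have "\<not> EIG_compl_adj (Zn n) (divisor_ideal n d) L" for L
  proof
    assume adj: "EIG_compl_adj (Zn n) (divisor_ideal n d) L"
    hence "L \<in> EIG_vertices (Zn n)" by (simp add: EIG_compl_adj_def)
    then obtain e where e: "e \<in> nontrivial_divisors n" "L = divisor_ideal n e" using V by blast
    thus False using adj iso EIG_compl_adj_Zn[OF n d e(1)] by blast
  qed
  ultimately show ?thesis by (intro not_graph_connected_if_isolated[OF u]) auto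
qed

section \<open>Squarefree moduli\<close>

lemma squarefree_eq_if_prime_factors_eq:
  fixes a b :: nat
  assumes sq: "squarefree a" "squarefree b" and P: "prime_factors a = prime_factors b"
  shows "a = b"
proof -
  have nz: "a \<noteq> 0" "b \<noteq> 0" using sq by (metis not_squarefree_0)+
  have "multiplicity p a = multiplicity p b" if p: "prime p" for p
  proof -
    have "multiplicity p a \<le> 1" "multiplicity p b \<le> 1"
      using sq p squarefree_factorial_semiring''[OF nz(1)] squarefree_factorial_semiring''[OF nz(2)]
      by blast+
    moreover have "multiplicity p a > 0 \<longleftrightarrow> multiplicity p b > 0"
      using P p by (auto simp: prime_factors_multiplicity set_eq_iff)
    ultimately show ?thesis by linarith
  qed
  hence "normalize a = normalize b" by (rule multiplicity_eq_imp_eq[OF nz])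
  thus ?thesis by simp
qed

lemma prime_factors_nontrivial_divisor:
  assumes sq: "squarefree n" and d: "d \<in> nontrivial_divisors n"
  shows "prime_factors d \<noteq> {}" "prime_factors d \<subset> prime_factors n"
proof -
  have d': "d dvd n" "d \<noteq> 1" "d \<noteq> n" using d by (auto simp: nontrivial_divisors_def)
  have "n \<noteq> 0" "d \<noteq> 0" using sq d' by (metis not_squarefree_0 dvd_0_left)+
  show "prime_factors d \<noteq> {}"
    using d'(2) \<open>d \<noteq> 0\<close> prime_factor_nat[of d] by (auto simp: prime_factors_dvd)
  have "prime_factors d \<noteq> prime_factors n"
    using squarefree_eq_if_prime_factors_eq squarefree_mono[OF d'(1) sq] sq d'(3) by blast
  thus "prime_factors d \<subset> prime_factors n" using dvd_prime_factors[OF \<open>n \<noteq> 0\<close> d'(1)] by blast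
qed

lemma nontrivial_divisorI:
  assumes "d dvd n" "d \<noteq> 1" "card (prime_factors d) < card (prime_factors n)"
  shows "d \<in> nontrivial_divisors n"
  using assms by (auto simp: nontrivial_divisors_def)

lemma EIG_compl_rtranclp_if_common_prime:
  assumes n: "n \<ge> 2" and sq: "squarefree n"
    and d: "d \<in> nontrivial_divisors n" and e: "e \<in> nontrivial_divisors n"
    and p: "prime p" "p dvd d" "p dvd e"
  shows "(EIG_compl_adj (Zn n))\<^sup>*\<^sup>* (divisor_ideal n d) (divisor_ideal n e)"
proof (cases "d = e")
  case False
  have "gcd d e \<noteq> 1" using p by (metis gcd_greatest not_prime_unit)
  moreover have "gcd d e dvd n" using d by (auto simp: nontrivial_divisors_def intro: dvd_trans)
  ultimately have "\<not> essential_divisor n (gcd d e)"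
    using essential_divisor_squarefree_iff[OF sq] by blast
  thus ?thesis using EIG_compl_adj_Zn[OF n d e] False by auto
qed simp

lemma EIG_compl_connected_if_squarefree:
  assumes n: "n \<ge> 2" and sq: "squarefree n" and k: "card (prime_factors n) \<ge> 3"
  shows "graph_connected (EIG_vertices (Zn n)) (EIG_compl_adj (Zn n))"
  unfolding graph_connected_def EIG_vertices_Zn[OF n]
proof (intro ballI, elim imageE)
  let ?R = "(EIG_compl_adj (Zn n))\<^sup>*\<^sup>*"
  have "n \<noteq> 0" using n by simp
  have prime_div: "p \<in> nontrivial_divisors n" if "prime p" "p dvd n" for p
    using that k by (intro nontrivial_divisorI) (auto simp: prime_prime_factors)
  have path_primes: "?R (divisor_ideal n p) (divisor_ideal n q)"
    if p: "prime p" "p dvd n" and q: "prime q" "q dvd n" for p q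
  proof (cases "p = q")
    case False
    have pq: "p * q dvd n" using p q False by (simp add: primes_coprime divides_mult)
    have "prime_factors (p * q) = {p, q}"
      using p q by (auto simp: prime_factors_product prime_prime_factors)
    moreover have "p * q \<noteq> 1" using p(1) by (auto simp: not_prime_1)
    moreover have "card {p, q} < card (prime_factors n)" using False k by simp
    ultimately have pq_div: "p * q \<in> nontrivial_divisors n"
      using pq by (intro nontrivial_divisorI) simp_all
    have "?R (divisor_ideal n p) (divisor_ideal n (p * q))"
      by (rule EIG_compl_rtranclp_if_common_prime[OF n sq prime_div[OF p] pq_div p(1)]) simp_all
    also have "?R \<dots> (divisor_ideal n q)"
      by (rule EIG_compl_rtranclp_if_common_prime[OF n sq pq_div prime_div[OF q] q(1)]) simp_all
    finally show ?thesis .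
  qed simp
  fix I K d e
  assume d: "d \<in> nontrivial_divisors n" and I: "I = divisor_ideal n d"
    and e: "e \<in> nontrivial_divisors n" and K: "K = divisor_ideal n e"
  obtain p where p: "prime p" "p dvd d" using d prime_factor_nat[of d] by (auto simp: nontrivial_divisors_def)
  obtain q where q: "prime q" "q dvd e" using e prime_factor_nat[of e] by (auto simp: nontrivial_divisors_def)
  have "p dvd n" "q dvd n" using p q d e by (auto simp: nontrivial_divisors_def intro: dvd_trans)
  have "?R (divisor_ideal n d) (divisor_ideal n p)"
    using EIG_compl_rtranclp_if_common_prime[OF n sq d prime_div] p \<open>p dvd n\<close> by simp
  also have "?R \<dots> (divisor_ideal n q)" using path_primes p q \<open>p dvd n\<close> \<open>q dvd n\<close> by blast
  also have "?R \<dots> (divisor_ideal n e)"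
    using EIG_compl_rtranclp_if_common_prime[OF n sq prime_div e] q \<open>q dvd n\<close> by simp
  finally show "?R I K" using I K by simp
qed

lemma squarefree_if_EIG_compl_connected:
  assumes n: "n \<ge> 2" and two: "\<exists>I\<in>EIG_vertices (Zn n). \<exists>K\<in>EIG_vertices (Zn n). I \<noteq> K"
    and conn: "graph_connected (EIG_vertices (Zn n)) (EIG_compl_adj (Zn n))"
  shows "squarefree n"
proof (rule ccontr)
  assume "\<not> squarefree n"
  then obtain p where p: "prime p" "p ^ 2 dvd n"
    using squarefree_factorial_semiring[of n] n by auto
  have "p dvd n" using p(2) by (simp add: power2_eq_square dvd_mult_left)
  have "p \<noteq> n"
  proof
    assume "p = n"
    hence "p * p dvd p * 1" using p(2) by (simp add: power2_eq_square)
    hence "p dvd 1" using p(1) by (simp add: prime_gt_0_nat)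
    thus False using p(1) by simp
  qed
  hence "p \<in> nontrivial_divisors n"
    using \<open>p dvd n\<close> p(1) by (auto simp: nontrivial_divisors_def)
  moreover have "essential_divisor n (gcd p e)" for e
  proof -
    have "gcd p e = 1 \<or> gcd p e = p" using p(1) by (simp add: prime_nat_iff)
    thus ?thesis using essential_divisor_1 essential_divisor_prime_if_square_dvd[OF p] by auto
  qed
  ultimately show False using EIG_compl_not_connected_if_isolated_divisor[OF n _ _ two] conn by blast
qed

text \<open>With two prime factors \<open>p, q\<close> the only vertices are \<open>\<langle>p\<rangle>\<close> and \<open>\<langle>q\<rangle>\<close>, and
  \<open>\<langle>p\<rangle> + \<langle>q\<rangle>\<close> is the whole ring.\<close>

lemma card_prime_factors_ge_3_if_EIG_compl_connected:
  assumes n: "n \<ge> 2" and sq: "squarefree n"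
    and two: "\<exists>I\<in>EIG_vertices (Zn n). \<exists>K\<in>EIG_vertices (Zn n). I \<noteq> K"
    and conn: "graph_connected (EIG_vertices (Zn n)) (EIG_compl_adj (Zn n))"
  shows "card (prime_factors n) \<ge> 3"
proof (rule ccontr)
  assume "\<not> card (prime_factors n) \<ge> 3"
  obtain d where d: "d \<in> nontrivial_divisors n" using two EIG_vertices_Zn[OF n] by auto
  have "0 < card (prime_factors d)"
    using prime_factors_nontrivial_divisor(1)[OF sq d] by (simp add: card_gt_0_iff)
  moreover have "card (prime_factors d) < card (prime_factors n)"
    using prime_factors_nontrivial_divisor(2)[OF sq d] by (simp add: psubset_card_mono)
  ultimately
  have "card (prime_factors n) = 2" using \<open>\<not> card (prime_factors n) \<ge> 3\<close> by linarith
  then obtain p q where P: "prime_factors n = {p, q}" "p \<noteq> q" by (meson card_2_iff)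
  have p: "prime p" "p dvd n" using P(1) by (auto simp: in_prime_factors_iff)
  have pp: "prime_factors p = {p}" using p(1) by (rule prime_prime_factors)
  have p_div: "p \<in> nontrivial_divisors n"
    using p P pp by (intro nontrivial_divisorI) (auto simp: not_prime_1)
  moreover have "essential_divisor n (gcd p e)"
    if e: "e \<in> nontrivial_divisors n" "e \<noteq> p" for e
  proof -
    have "prime_factors e \<noteq> {p}"
      using e sq pp squarefree_eq_if_prime_factors_eq squarefree_prime[OF p(1)]
        squarefree_mono[of e n] by (auto simp: nontrivial_divisors_def)
    hence "p \<notin> prime_factors e" using prime_factors_nontrivial_divisor[OF sq e(1)] P by auto
    moreover have "e \<noteq> 0" using e(1) sq by (auto simp: nontrivial_divisors_def)
    ultimately have "coprime p e" using p(1) by (auto simp: prime_imp_coprime in_prime_factors_iff)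
    thus ?thesis by (metis coprime_iff_gcd_eq_1 essential_divisor_1)
  qed
  ultimately show False using EIG_compl_not_connected_if_isolated_divisor[OF n _ _ two] conn by blast
qed

theorem mainTheorem14:
  fixes n :: nat
  assumes "n \<ge> 2"
    and "\<exists>I\<in>EIG_vertices (Zn n). \<exists>K\<in>EIG_vertices (Zn n). I \<noteq> K"
  shows "graph_connected (EIG_vertices (Zn n)) (EIG_compl_adj (Zn n)) \<longleftrightarrow>
         squarefree n \<and> card (prime_factors n) \<ge> 3"
proof
  assume conn: "graph_connected (EIG_vertices (Zn n)) (EIG_compl_adj (Zn n))"
  hence "squarefree n" by (rule squarefree_if_EIG_compl_connected[OF assms])
  with conn show "squarefree n \<and> card (prime_factors n) \<ge> 3"
    using card_prime_factors_ge_3_if_EIG_compl_connected assms by blast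
qed (use EIG_compl_connected_if_squarefree assms(1) in blast)

end
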